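(* Let $\alpha\in(0,1]$, let $I\subseteq\mathbb R$ be an interval with $0$ in its interior, and let $\gamma:I\to\mathbb H$ be continuous with, for some $\varrho>0$, $$[\gamma_0^{-1}\gamma_t]^{\mathsf h}\le\varrho|t|^{\frac{1+\alpha}2}\quad\text{and}\quad|(\gamma_0^{-1}\gamma_t)^{\mathsf v}-t|\le\varrho^2|t|^{1+\alpha}\qquad\text{for all }t\in I.$$ Then there exists $\delta_2>0$ with $[-\delta_2,\delta_2]\subseteq I$ such that for every $\delta\in(0,\delta_2]$ there is $\varepsilon_2=\varepsilon_2(\delta)>0$ with the property: for every $x\in B(\gamma_0,\varepsilon_2)$ there exists $t=t(x)\in[-\delta,\delta]$ with $[\gamma_t^{-1}x]^{\mathsf v}\le[\gamma_t^{-1}x]^{\mathsf h}$.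
   Context: The Heisenberg group $\mathbb H$ is $\mathbb R^3$ with product $(x^1,x^2,x^3)(y^1,y^2,y^3)=(x^1+y^1,x^2+y^2,x^3+y^3+x^1y^2-x^2y^1)$, inverse $x^{-1}=-x$. For $x\in\mathbb H$: $x^{\mathsf h}=(x^1,x^2)$, $x^{\mathsf v}=x^3$, $[x]^{\mathsf h}=|x^{\mathsf h}|$, $[x]^{\mathsf v}=\sqrt{|x^3|}$. $\mathsf d$ is a fixed distance on $\mathbb H$, left-invariant and $1$-homogeneous w.r.t. dilations $\delta_r(x)=(rx^1,rx^2,r^2x^3)$; $B(x,r)$ is the open $\mathsf d$-ball. *)

theory Defs
  imports "HOL-Analysis.Analysis"
begin

type_synonym heis = "real \<times> real \<times> real"

definition hmul :: "heis \<Rightarrow> heis \<Rightarrow> heis" where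
  "hmul x y = (case x of (x1, x2, x3) \<Rightarrow> case y of (y1, y2, y3) \<Rightarrow>
      (x1 + y1, x2 + y2, x3 + y3 + x1 * y2 - x2 * y1))"

definition hinv :: "heis \<Rightarrow> heis" where
  "hinv x = (case x of (x1, x2, x3) \<Rightarrow> (- x1, - x2, - x3))"

definition hvert :: "heis \<Rightarrow> real" where
  "hvert x = snd (snd x)"

definition hnormh :: "heis \<Rightarrow> real" where
  "hnormh x = sqrt ((fst x)\<^sup>2 + (fst (snd x))\<^sup>2)"

definition hnormv :: "heis \<Rightarrow> real" where
  "hnormv x = sqrt \<bar>snd (snd x)\<bar>"

definition hdil :: "real \<Rightarrow> heis \<Rightarrow> heis" where
  "hdil r x = (case x of (x1, x2, x3) \<Rightarrow> (r * x1, r * x2, r\<^sup>2 * x3))"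

definition homog_dist :: "(heis \<Rightarrow> heis \<Rightarrow> real) \<Rightarrow> bool" where
  "homog_dist d \<longleftrightarrow>
     (\<forall>x y. d x y \<ge> 0) \<and>
     (\<forall>x y. d x y = 0 \<longleftrightarrow> x = y) \<and>
     (\<forall>x y. d x y = d y x) \<and>
     (\<forall>x y z. d x z \<le> d x y + d y z) \<and>
     (\<forall>x y z. d (hmul z x) (hmul z y) = d x y) \<and>
     (\<forall>r x y. r > 0 \<longrightarrow> d (hdil r x) (hdil r y) = r * d x y)"

definition hball :: "(heis \<Rightarrow> heis \<Rightarrow> real) \<Rightarrow> heis \<Rightarrow> real \<Rightarrow> heis set" where
  "hball d x r = {y. d x y < r}"

end

theory Submission
  imports Defs
begin

text \<open>Put \<open>y = \<gamma>\<^sub>0\<inverse> x\<close> and \<open>\<eta>\<^sub>t = \<gamma>\<^sub>0\<inverse> \<gamma>\<^sub>t\<close>. The vertical coordinate of \<open>\<gamma>\<^sub>t\<inverse> x\<close> is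
  \<open>y\<^sup>v - \<eta>\<^sub>t\<^sup>v\<close> plus a bilinear term in \<open>y\<^sup>h\<close> and \<open>\<eta>\<^sub>t\<^sup>h\<close>, and the hypotheses give
  \<open>\<eta>\<^sub>t\<^sup>v \<approx> t\<close> with \<open>\<eta>\<^sub>t\<^sup>h\<close> bounded. A homogeneous distance dominates the gauge
  \<open>|y\<^sub>1| + |y\<^sub>2| + \<surd>|y\<^sub>3|\<close> (it is continuous and positive on the compact unit gauge sphere),
  so for \<open>x\<close> close to \<open>\<gamma>\<^sub>0\<close> all coordinates of \<open>y\<close> are small. Then the vertical
  coordinate of \<open>\<gamma>\<^sub>t\<inverse> x\<close> has the sign of \<open>-t\<close> at \<open>t = \<plusminus>\<delta>\<close>, and by the intermediate
  value theorem it vanishes for some \<open>t \<in> [-\<delta>, \<delta>]\<close>, where \<open>[\<gamma>\<^sub>t\<inverse> x]\<^sup>v = 0\<close>.\<close>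

lemma hmul_components: "hmul x y = (fst x + fst y, fst (snd x) + fst (snd y),
   snd (snd x) + snd (snd y) + fst x * fst (snd y) - fst (snd x) * fst y)"
  by (cases x; cases y) (auto simp: hmul_def)

lemma hinv_components: "hinv x = (- fst x, - fst (snd x), - snd (snd x))"
  by (cases x) (auto simp: hinv_def)

lemma hmul_hinv_left [simp]: "hmul (hinv x) x = (0, 0, 0)"
  by (simp add: hmul_components hinv_components)

lemma hvert_hinv_mul:
  "hvert (hmul (hinv g) x) = hvert (hmul (hinv g0) x) - hvert (hmul (hinv g0) g)
     - fst (hmul (hinv g0) g) * fst (snd (hmul (hinv g0) x))
     + fst (snd (hmul (hinv g0) g)) * fst (hmul (hinv g0) x)"
  by (simp add: hmul_components hinv_components hvert_def algebra_simps)

lemma abs_le_hnormh: "\<bar>fst z\<bar> \<le> hnormh z" "\<bar>fst (snd z)\<bar> \<le> hnormh z"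
  unfolding hnormh_def by (auto intro: real_le_rsqrt)

definition hgauge :: "heis \<Rightarrow> real" where
  "hgauge y = \<bar>fst y\<bar> + \<bar>fst (snd y)\<bar> + sqrt \<bar>snd (snd y)\<bar>"

lemma hgauge_nonneg: "hgauge y \<ge> 0"
  by (simp add: hgauge_def)

lemma hgauge_eq_0_iff: "hgauge y = 0 \<longleftrightarrow> y = (0, 0, 0)"
  by (cases y) (auto simp: hgauge_def add_nonneg_eq_0_iff)

lemma hgauge_hdil: "r \<ge> 0 \<Longrightarrow> hgauge (hdil r y) = r * hgauge y"
  by (cases y) (simp add: hgauge_def hdil_def abs_mult real_sqrt_mult distrib_left)

lemma compact_hgauge_sphere: "compact {y. hgauge y = 1}"
proof (rule compact_eq_bounded_closed[THEN iffD2], rule conjI)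
  show "closed {y. hgauge y = 1}"
    unfolding hgauge_def by (intro closed_Collect_eq continuous_intros)
  show "bounded {y. hgauge y = 1}"
    unfolding bounded_iff
  proof (intro exI ballI)
    fix y :: heis
    assume "y \<in> {y. hgauge y = 1}"
    then have "\<bar>fst y\<bar> + \<bar>fst (snd y)\<bar> + sqrt \<bar>snd (snd y)\<bar> = 1"
      by (simp add: hgauge_def)
    then have "\<bar>fst y\<bar> \<le> 1" "\<bar>fst (snd y)\<bar> \<le> 1" "sqrt \<bar>snd (snd y)\<bar> \<le> 1"
      using real_sqrt_ge_zero[of "\<bar>snd (snd y)\<bar>"] by linarith+
    then have "\<bar>fst y\<bar> + (\<bar>fst (snd y)\<bar> + \<bar>snd (snd y)\<bar>) \<le> 3"
      by simp
    moreover have "norm y \<le> \<bar>fst y\<bar> + (\<bar>fst (snd y)\<bar> + \<bar>snd (snd y)\<bar>)"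
      using norm_Pair_le[of "fst y" "snd y"] norm_Pair_le[of "fst (snd y)" "snd (snd y)"] by simp
    ultimately show "norm y \<le> 3"
      by linarith
  qed
qed

context
  fixes d :: "heis \<Rightarrow> heis \<Rightarrow> real"
  assumes d: "homog_dist d"
begin

lemma homog_dist_nonneg: "d x y \<ge> 0"
  and homog_dist_self: "d x x = 0"
  and homog_dist_eq_0_iff: "d x y = 0 \<longleftrightarrow> x = y"
  and homog_dist_commute: "d x y = d y x"
  and homog_dist_triangle: "d x z \<le> d x y + d y z"
  using d unfolding homog_dist_def by blast+

lemma homog_dist_left_translate: "d g x = d (0, 0, 0) (hmul (hinv g) x)"
  using d unfolding homog_dist_def by (metis hmul_hinv_left)

lemma homog_dist_hdil: "r \<ge> 0 \<Longrightarrow> d (0, 0, 0) (hdil r y) = r * d (0, 0, 0) y"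
proof (cases "r = 0")
  case False
  assume "r \<ge> 0"
  then have "d (hdil r (0, 0, 0)) (hdil r y) = r * d (0, 0, 0) y"
    using False d unfolding homog_dist_def by (metis order_neq_le_trans)
  then show ?thesis by (simp add: hdil_def)
qed (simp add: hdil_def homog_dist_self)

lemma homog_dist_hmul_le: "d (0, 0, 0) (hmul g h) \<le> d (0, 0, 0) g + d (0, 0, 0) h"
proof -
  have "hmul (hinv g) (hmul g h) = h"
    by (simp add: hmul_components hinv_components algebra_simps)
  then have "d g (hmul g h) = d (0, 0, 0) h"
    by (simp add: homog_dist_left_translate[of g])
  then show ?thesis
    using homog_dist_triangle[of "(0, 0, 0)" "hmul g h" g] by simp
qed

lemma homog_dist_axes_le:
  obtains C where "C \<ge> 0"
    and "\<And>a. d (0, 0, 0) (a, 0, 0) \<le> C * \<bar>a\<bar>"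
    and "\<And>b. d (0, 0, 0) (0, b, 0) \<le> C * \<bar>b\<bar>"
    and "\<And>c. d (0, 0, 0) (0, 0, c) \<le> C * sqrt \<bar>c\<bar>"
proof -
  define S :: "real set" where "S = {-1, 0, 1}"
  define C where "C = Max ((\<lambda>u. d (0, 0, 0) u) ` (S \<times> S \<times> S))"
  have sgn_S: "sgn x \<in> S" for x :: real
    by (simp add: S_def sgn_real_def)
  have "finite (S \<times> S \<times> S)"
    by (simp add: S_def)
  then have le_Max: "d (0, 0, 0) u \<le> C" if "u \<in> S \<times> S \<times> S" for u
    unfolding C_def using that by (intro Max_ge) auto
  have le_C: "d (0, 0, 0) (hdil r u) \<le> r * C" if "r \<ge> 0" "u \<in> S \<times> S \<times> S" for r u
    using le_Max[OF that(2)] that(1) by (simp add: homog_dist_hdil mult_left_mono)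
  show ?thesis
  proof
    show "C \<ge> 0"
      using le_Max[of "(0, 0, 0)"] homog_dist_self by (simp add: S_def)
    show "d (0, 0, 0) (a, 0, 0) \<le> C * \<bar>a\<bar>" for a
    proof -
      have "(a, 0, 0) = hdil \<bar>a\<bar> (sgn a, 0, 0)"
        by (simp add: hdil_def abs_mult_sgn)
      then show ?thesis
        using le_C[of "\<bar>a\<bar>" "(sgn a, 0, 0)"] sgn_S by (simp add: S_def mult.commute)
    qed
    show "d (0, 0, 0) (0, b, 0) \<le> C * \<bar>b\<bar>" for b
    proof -
      have "(0, b, 0) = hdil \<bar>b\<bar> (0, sgn b, 0)"
        by (simp add: hdil_def abs_mult_sgn)
      then show ?thesis
        using le_C[of "\<bar>b\<bar>" "(0, sgn b, 0)"] sgn_S by (simp add: S_def mult.commute)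
    qed
    show "d (0, 0, 0) (0, 0, c) \<le> C * sqrt \<bar>c\<bar>" for c
    proof -
      have "(0, 0, c) = hdil (sqrt \<bar>c\<bar>) (0, 0, sgn c)"
        by (simp add: hdil_def abs_mult_sgn)
      then show ?thesis
        using le_C[of "sqrt \<bar>c\<bar>" "(0, 0, sgn c)"] sgn_S by (simp add: S_def mult.commute)
    qed
  qed
qed

lemma homog_dist_upper_bound:
  obtains C where "C \<ge> 0"
    and "\<And>w. d (0, 0, 0) w \<le> C * (\<bar>fst w\<bar> + \<bar>fst (snd w)\<bar>
                                  + sqrt \<bar>snd (snd w) - fst w * fst (snd w)\<bar>)"
proof -
  obtain C where C: "C \<ge> 0"
    "\<And>a. d (0, 0, 0) (a, 0, 0) \<le> C * \<bar>a\<bar>"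
    "\<And>b. d (0, 0, 0) (0, b, 0) \<le> C * \<bar>b\<bar>"
    "\<And>c. d (0, 0, 0) (0, 0, c) \<le> C * sqrt \<bar>c\<bar>"
    using homog_dist_axes_le by blast
  have "d (0, 0, 0) (a, b, c) \<le> C * (\<bar>a\<bar> + \<bar>b\<bar> + sqrt \<bar>c - a * b\<bar>)" for a b c
  proof -
    have "(a, b, c) = hmul (hmul (a, 0, 0) (0, b, 0)) (0, 0, c - a * b)"
      by (simp add: hmul_components)
    then have "d (0, 0, 0) (a, b, c)
        \<le> d (0, 0, 0) (hmul (a, 0, 0) (0, b, 0)) + d (0, 0, 0) (0, 0, c - a * b)"
      by (metis homog_dist_hmul_le)
    also have "\<dots> \<le> d (0, 0, 0) (a, 0, 0) + d (0, 0, 0) (0, b, 0) + d (0, 0, 0) (0, 0, c - a * b)"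
      using homog_dist_hmul_le[of "(a, 0, 0)" "(0, b, 0)"] by linarith
    also have "\<dots> \<le> C * \<bar>a\<bar> + C * \<bar>b\<bar> + C * sqrt \<bar>c - a * b\<bar>"
      using C(2-4) by (intro add_mono)
    finally show ?thesis
      by (simp add: distrib_left)
  qed
  then show ?thesis
    using that[OF C(1)] by (metis prod.collapse)
qed

lemma continuous_homog_dist: "continuous_on UNIV (d (0, 0, 0))"
proof -
  obtain C where C: "\<And>w. d (0, 0, 0) w \<le> C * (\<bar>fst w\<bar> + \<bar>fst (snd w)\<bar>
                                  + sqrt \<bar>snd (snd w) - fst w * fst (snd w)\<bar>)"
    using homog_dist_upper_bound by blast
  define U where "U w = C * (\<bar>fst w\<bar> + \<bar>fst (snd w)\<bar>
                                  + sqrt \<bar>snd (snd w) - fst w * fst (snd w)\<bar>)" for w :: heis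
  have "isCont (d (0, 0, 0)) y" for y
  proof -
    have "((\<lambda>z. U (hmul (hinv y) z)) \<longlongrightarrow> U (hmul (hinv y) y)) (at y)"
      unfolding U_def hmul_components hinv_components by (intro tendsto_intros)
    then have U_lim: "((\<lambda>z. U (hmul (hinv y) z)) \<longlongrightarrow> 0) (at y)"
      by (simp add: U_def)
    have "norm (d (0, 0, 0) z - d (0, 0, 0) y) \<le> U (hmul (hinv y) z)" for z
      using homog_dist_triangle[of "(0, 0, 0)" z y] homog_dist_triangle[of "(0, 0, 0)" y z]
        homog_dist_commute[of z y] C[of "hmul (hinv y) z"] homog_dist_left_translate[of y z]
      by (simp add: U_def)
    then have "((\<lambda>z. d (0, 0, 0) z - d (0, 0, 0) y) \<longlongrightarrow> 0) (at y)"
      by (intro Lim_null_comparison[OF _ U_lim]) auto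
    then show ?thesis
      unfolding isCont_def using Lim_null by blast
  qed
  then show ?thesis
    by (simp add: continuous_at_imp_continuous_on)
qed

lemma homog_dist_lower_bound:
  obtains m where "m > 0" and "\<And>y. m * hgauge y \<le> d (0, 0, 0) y"
proof -
  define S where "S = {y. hgauge y = 1}"
  have "(1, 0, 0) \<in> S"
    by (simp add: S_def hgauge_def)
  then obtain z where z: "z \<in> S" and z_min: "\<And>y. y \<in> S \<Longrightarrow> d (0, 0, 0) z \<le> d (0, 0, 0) y"
    using continuous_attains_inf[OF compact_hgauge_sphere[folded S_def], of "d (0, 0, 0)"]
      continuous_on_subset[OF continuous_homog_dist] by blast
  have "z \<noteq> (0, 0, 0)"
    using z by (auto simp: S_def hgauge_def)
  then have m_pos: "d (0, 0, 0) z > 0"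
    using homog_dist_nonneg homog_dist_eq_0_iff by (metis less_eq_real_def)
  have "d (0, 0, 0) z * hgauge y \<le> d (0, 0, 0) y" for y
  proof (cases "y = (0, 0, 0)")
    case True
    then show ?thesis by (simp add: hgauge_def homog_dist_self)
  next
    case False
    define r where "r = hgauge y"
    have r_pos: "r > 0"
      using False hgauge_nonneg hgauge_eq_0_iff unfolding r_def by (metis less_eq_real_def)
    have "y = hdil r (hdil (1 / r) y)"
      using r_pos by (cases y) (simp add: hdil_def power2_eq_square)
    moreover have "hdil (1 / r) y \<in> S"
      using r_pos by (simp add: S_def hgauge_hdil r_def)
    ultimately show ?thesis
      using z_min[of "hdil (1 / r) y"] r_pos
      by (metis homog_dist_hdil less_eq_real_def mult.commute mult_le_cancel_left_pos r_def)
  qed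
  with m_pos show ?thesis
    using that by blast
qed

lemma homog_dist_small_coordinates:
  assumes "e > 0"
  obtains \<epsilon> where "\<epsilon> > 0"
    and "\<And>g x. d g x < \<epsilon> \<Longrightarrow> \<bar>fst (hmul (hinv g) x)\<bar> \<le> e
                            \<and> \<bar>fst (snd (hmul (hinv g) x))\<bar> \<le> e \<and> \<bar>hvert (hmul (hinv g) x)\<bar> \<le> e"
proof -
  obtain m where m: "m > 0" "\<And>y. m * hgauge y \<le> d (0, 0, 0) y"
    using homog_dist_lower_bound by blast
  show ?thesis
  proof
    show "m * min e (sqrt e) > 0"
      using m(1) assms by simp
    fix g x
    assume "d g x < m * min e (sqrt e)"
    then have "hgauge (hmul (hinv g) x) < min e (sqrt e)"
      using m homog_dist_left_translate[of g x] by (smt (verit) mult_le_cancel_left_pos)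
    then show "\<bar>fst (hmul (hinv g) x)\<bar> \<le> e \<and> \<bar>fst (snd (hmul (hinv g) x))\<bar> \<le> e
                  \<and> \<bar>hvert (hmul (hinv g) x)\<bar> \<le> e"
      unfolding hgauge_def hvert_def
      by (smt (verit, best) abs_ge_zero real_sqrt_ge_zero real_sqrt_less_iff min_less_iff_conj)
  qed
qed

end

lemma hvert_hinv_mul_sign:
  assumes "hnormh (hmul (hinv g0) g) \<le> K"
    and "\<bar>hvert (hmul (hinv g0) g) - t\<bar> \<le> \<bar>t\<bar> / 2"
    and "\<bar>fst (hmul (hinv g0) x)\<bar> \<le> e" "\<bar>fst (snd (hmul (hinv g0) x))\<bar> \<le> e"
      "\<bar>hvert (hmul (hinv g0) x)\<bar> \<le> e"
    and "e * (1 + 2 * K) \<le> \<bar>t\<bar> / 2"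
  shows "t * hvert (hmul (hinv g) x) \<le> 0"
proof -
  define \<eta> where "\<eta> = hmul (hinv g0) g"
  define y where "y = hmul (hinv g0) x"
  have "\<bar>fst \<eta> * fst (snd y)\<bar> \<le> K * e" "\<bar>fst (snd \<eta>) * fst y\<bar> \<le> K * e"
    using assms(1,3,4) abs_le_hnormh[of \<eta>] unfolding \<eta>_def y_def abs_mult
    by (auto intro!: mult_mono)
  then have "\<bar>hvert (hmul (hinv g) x) + hvert \<eta>\<bar> \<le> e * (1 + 2 * K)"
    using hvert_hinv_mul[of g x g0] assms(5) unfolding \<eta>_def y_def by (simp add: algebra_simps)
  then have "\<bar>hvert (hmul (hinv g) x) + t\<bar> \<le> \<bar>t\<bar>"
    using assms(2,6) unfolding \<eta>_def by linarith
  then show ?thesis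
    by (smt (verit) mult_nonneg_nonpos mult_nonpos_nonneg)
qed

lemma hvert_hinv_curve_eq_0:
  assumes "continuous_on {-\<delta>..\<delta>} \<gamma>" and "\<delta> > 0"
    and "\<delta> * hvert (hmul (hinv (\<gamma> \<delta>)) x) \<le> 0"
    and "- \<delta> * hvert (hmul (hinv (\<gamma> (- \<delta>))) x) \<le> 0"
  shows "\<exists>t\<in>{-\<delta>..\<delta>}. hvert (hmul (hinv (\<gamma> t)) x) = 0"
proof -
  define V where "V t = hvert (hmul (hinv (\<gamma> t)) x)" for t
  have "continuous_on {-\<delta>..\<delta>} V"
    unfolding V_def hvert_def hmul_components hinv_components
    using assms(1) by (intro continuous_intros)
  moreover have "V \<delta> \<le> 0" "0 \<le> V (- \<delta>)"
    using assms(2-4) unfolding V_def by (auto simp: mult_le_0_iff zero_le_mult_iff)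
  ultimately show ?thesis
    using IVT2'[of V \<delta> 0 "- \<delta>"] assms(2) unfolding V_def by auto
qed

lemma homog_dist_hvert_hinv_curve_eq_0:
  assumes "homog_dist d"
    and "continuous_on {-\<delta>..\<delta>} \<gamma>" and "\<delta> > 0"
    and "\<And>t. t \<in> {-\<delta>, \<delta>} \<Longrightarrow> hnormh (hmul (hinv (\<gamma> 0)) (\<gamma> t)) \<le> K"
    and "\<And>t. t \<in> {-\<delta>, \<delta>} \<Longrightarrow> \<bar>hvert (hmul (hinv (\<gamma> 0)) (\<gamma> t)) - t\<bar> \<le> \<delta> / 2"
  obtains \<epsilon> where "\<epsilon> > 0"
    and "\<And>x. d (\<gamma> 0) x < \<epsilon> \<Longrightarrow> \<exists>t\<in>{-\<delta>..\<delta>}. hvert (hmul (hinv (\<gamma> t)) x) = 0"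
proof -
  have "K \<ge> 0"
    using assms(4)[of \<delta>] real_sqrt_ge_zero unfolding hnormh_def by (meson insertI2 order_trans singletonI zero_le_power2 add_nonneg_nonneg)
  define e where "e = \<delta> / (2 * (1 + 2 * K))"
  have e_pos: "e > 0" and e_le: "e * (1 + 2 * K) \<le> \<delta> / 2"
    using \<open>K \<ge> 0\<close> assms(3) by (simp_all add: e_def field_simps)
  obtain \<epsilon> where "\<epsilon> > 0" and small: "\<And>g x. d g x < \<epsilon> \<Longrightarrow> \<bar>fst (hmul (hinv g) x)\<bar> \<le> e
                            \<and> \<bar>fst (snd (hmul (hinv g) x))\<bar> \<le> e \<and> \<bar>hvert (hmul (hinv g) x)\<bar> \<le> e"
    using homog_dist_small_coordinates[OF assms(1) e_pos] by blast
  show ?thesis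
  proof (rule that[OF \<open>\<epsilon> > 0\<close>])
    fix x
    assume "d (\<gamma> 0) x < \<epsilon>"
    then have coords: "\<bar>fst (hmul (hinv (\<gamma> 0)) x)\<bar> \<le> e" "\<bar>fst (snd (hmul (hinv (\<gamma> 0)) x))\<bar> \<le> e"
        "\<bar>hvert (hmul (hinv (\<gamma> 0)) x)\<bar> \<le> e"
      using small by blast+
    have "t * hvert (hmul (hinv (\<gamma> t)) x) \<le> 0" if "t \<in> {-\<delta>, \<delta>}" for t
    proof (rule hvert_hinv_mul_sign[OF assms(4)[OF that] _ coords])
      have "\<bar>t\<bar> = \<delta>"
        using that assms(3) by auto
      then show "\<bar>hvert (hmul (hinv (\<gamma> 0)) (\<gamma> t)) - t\<bar> \<le> \<bar>t\<bar> / 2" "e * (1 + 2 * K) \<le> \<bar>t\<bar> / 2"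
        using assms(5)[OF that] e_le by simp_all
    qed
    from this[of \<delta>] this[of "- \<delta>"]
    show "\<exists>t\<in>{-\<delta>..\<delta>}. hvert (hmul (hinv (\<gamma> t)) x) = 0"
      by (intro hvert_hinv_curve_eq_0[OF assms(2,3)]) auto
  qed
qed

lemma powr_one_plus_le_half:
  fixes \<alpha> \<rho> \<delta> :: real
  assumes "\<alpha> > 0" "\<rho> > 0" "\<delta> > 0" "\<delta> \<le> (1 / (2 * \<rho>\<^sup>2)) powr (1 / \<alpha>)"
  shows "\<rho>\<^sup>2 * \<delta> powr (1 + \<alpha>) \<le> \<delta> / 2"
proof -
  have "\<delta> powr \<alpha> \<le> ((1 / (2 * \<rho>\<^sup>2)) powr (1 / \<alpha>)) powr \<alpha>"
    using assms by (intro powr_mono2) auto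
  also have "\<dots> = 1 / (2 * \<rho>\<^sup>2)"
    using assms(1,2) by (simp add: powr_powr)
  finally have "\<rho>\<^sup>2 * \<delta> * \<delta> powr \<alpha> \<le> \<rho>\<^sup>2 * \<delta> * (1 / (2 * \<rho>\<^sup>2))"
    using assms(3) by (intro mult_left_mono) auto
  then show ?thesis
    using assms(2,3) by (simp add: powr_add field_simps)
qed

theorem mainTheorem4:
  fixes d :: "heis \<Rightarrow> heis \<Rightarrow> real"
    and \<alpha> \<rho> :: real and I :: "real set" and \<gamma> :: "real \<Rightarrow> heis"
  assumes "homog_dist d"
    and "0 < \<alpha>" and "\<alpha> \<le> 1"
    and "is_interval I" and "0 \<in> interior I"
    and "continuous_on I \<gamma>"
    and "\<rho> > 0"
    and "\<forall>t\<in>I. hnormh (hmul (hinv (\<gamma> 0)) (\<gamma> t)) \<le> \<rho> * \<bar>t\<bar> powr ((1 + \<alpha>) / 2)"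
    and "\<forall>t\<in>I. \<bar>hvert (hmul (hinv (\<gamma> 0)) (\<gamma> t)) - t\<bar> \<le> \<rho>\<^sup>2 * \<bar>t\<bar> powr (1 + \<alpha>)"
  shows "\<exists>\<delta>2>0. {-\<delta>2..\<delta>2} \<subseteq> I \<and>
           (\<forall>\<delta>. 0 < \<delta> \<and> \<delta> \<le> \<delta>2 \<longrightarrow>
              (\<exists>\<epsilon>2>0. \<forall>x\<in>hball d (\<gamma> 0) \<epsilon>2. \<exists>t\<in>{-\<delta>..\<delta>}.
                  hnormv (hmul (hinv (\<gamma> t)) x) \<le> hnormh (hmul (hinv (\<gamma> t)) x)))"
proof -
  obtain r where "r > 0" and r_ball: "ball 0 r \<subseteq> I"
    using assms(5) mem_interior by blast
  define \<delta>2 where "\<delta>2 = min (r / 2) ((1 / (2 * \<rho>\<^sup>2)) powr (1 / \<alpha>))"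
  have "\<delta>2 > 0"
    using \<open>r > 0\<close> assms(7) by (simp add: \<delta>2_def)
  have \<delta>2_sub: "{-\<delta>2..\<delta>2} \<subseteq> I"
    using \<open>r > 0\<close> r_ball by (force simp: \<delta>2_def dist_real_def)
  have "\<exists>\<epsilon>2>0. \<forall>x\<in>hball d (\<gamma> 0) \<epsilon>2. \<exists>t\<in>{-\<delta>..\<delta>}.
          hnormv (hmul (hinv (\<gamma> t)) x) \<le> hnormh (hmul (hinv (\<gamma> t)) x)"
    if "0 < \<delta>" and \<delta>_le: "\<delta> \<le> \<delta>2" for \<delta>
  proof -
    have sub: "{-\<delta>..\<delta>} \<subseteq> I"
      using \<delta>2_sub \<delta>_le by auto
    have half: "\<rho>\<^sup>2 * \<delta> powr (1 + \<alpha>) \<le> \<delta> / 2"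
      using \<open>0 < \<delta>\<close> \<delta>_le assms(2,7) by (intro powr_one_plus_le_half) (auto simp: \<delta>2_def)
    then have "hnormh (hmul (hinv (\<gamma> 0)) (\<gamma> t)) \<le> \<rho> * \<delta> powr ((1 + \<alpha>) / 2)
        \<and> \<bar>hvert (hmul (hinv (\<gamma> 0)) (\<gamma> t)) - t\<bar> \<le> \<delta> / 2" if "t \<in> {-\<delta>, \<delta>}" for t
    proof -
      have "t \<in> I" and t_abs: "\<bar>t\<bar> = \<delta>"
        using that sub \<open>0 < \<delta>\<close> by auto
      then have "hnormh (hmul (hinv (\<gamma> 0)) (\<gamma> t)) \<le> \<rho> * \<bar>t\<bar> powr ((1 + \<alpha>) / 2)"
        and "\<bar>hvert (hmul (hinv (\<gamma> 0)) (\<gamma> t)) - t\<bar> \<le> \<rho>\<^sup>2 * \<bar>t\<bar> powr (1 + \<alpha>)"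
        using assms(8,9) by blast+
      with half show ?thesis
        unfolding t_abs by linarith
    qed
    then obtain \<epsilon> where "\<epsilon> > 0"
      and \<epsilon>: "\<And>x. d (\<gamma> 0) x < \<epsilon> \<Longrightarrow> \<exists>t\<in>{-\<delta>..\<delta>}. hvert (hmul (hinv (\<gamma> t)) x) = 0"
      using homog_dist_hvert_hinv_curve_eq_0[OF assms(1) continuous_on_subset[OF assms(6) sub] \<open>0 < \<delta>\<close>]
      by blast
    have "hnormv z \<le> hnormh z" if "hvert z = 0" for z
      using that by (simp add: hnormv_def hnormh_def hvert_def)
    with \<open>\<epsilon> > 0\<close> \<epsilon> show ?thesis
      unfolding hball_def by blast
  qed
  with \<open>\<delta>2 > 0\<close> \<delta>2_sub show ?thesis
    by blast
qed

end
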